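(* Let $R$ be an associative ring with identity and involution $*$, and let $a\in R^{\#}\cap R^{\dagger}$. Then $a\in R^{SEP}$ if and only if $a^{\dagger}a^3a^*a^{\dagger}\in PE(R)$.
   Context: An involution on $R$ is a map $x\mapsto x^*$ with $(x^* )^*=x$, $(x+y)^*=x^*+y^*$, $(xy)^*=y^*x^*$. An element $a$ is Moore–Penrose invertible if there is $b$ with $aba=a$, $bab=b$, $(ab)^*=ab$, $(ba)^*=ba$; such $b$ is unique, denoted $a^{\dagger}$, and $R^{\dagger}$ is the set of such $a$. An element $a$ is group invertible if there is $b$ with $aba=a$, $bab=b$, $ab=ba$; such $b$ is unique, denoted $a^{\#}$, and $R^{\#}$ is the set of such $a$. $PE(R)=\{e\in R: e^2=e=e^*\}$ is the set of projections. For $a\in R^{\#}\cap R^{\dagger}$, $a$ is SEP if $a^*=a^{\dagger}=a^{\#}$; $R^{SEP}$ denotes the set of SEP elements. *)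

theory Defs
  imports Main
begin

definition is_involution :: "('a::ring_1 \<Rightarrow> 'a) \<Rightarrow> bool" where
  "is_involution s \<longleftrightarrow>
     (\<forall>x. s (s x) = x) \<and> (\<forall>x y. s (x + y) = s x + s y) \<and> (\<forall>x y. s (x * y) = s y * s x)"

definition is_mp_inverse :: "('a::ring_1 \<Rightarrow> 'a) \<Rightarrow> 'a \<Rightarrow> 'a \<Rightarrow> bool" where
  "is_mp_inverse s a b \<longleftrightarrow> a * b * a = a \<and> b * a * b = b \<and> s (a * b) = a * b \<and> s (b * a) = b * a"

definition mp_invertible :: "('a::ring_1 \<Rightarrow> 'a) \<Rightarrow> 'a \<Rightarrow> bool" where
  "mp_invertible s a \<longleftrightarrow> (\<exists>b. is_mp_inverse s a b)"

definition mp_inv :: "('a::ring_1 \<Rightarrow> 'a) \<Rightarrow> 'a \<Rightarrow> 'a" where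
  "mp_inv s a = (THE b. is_mp_inverse s a b)"

definition is_group_inverse :: "'a::ring_1 \<Rightarrow> 'a \<Rightarrow> bool" where
  "is_group_inverse a b \<longleftrightarrow> a * b * a = a \<and> b * a * b = b \<and> a * b = b * a"

definition group_invertible :: "'a::ring_1 \<Rightarrow> bool" where
  "group_invertible a \<longleftrightarrow> (\<exists>b. is_group_inverse a b)"

definition group_inv :: "'a::ring_1 \<Rightarrow> 'a" where
  "group_inv a = (THE b. is_group_inverse a b)"

definition projection :: "('a::ring_1 \<Rightarrow> 'a) \<Rightarrow> 'a \<Rightarrow> bool" where
  "projection s e \<longleftrightarrow> e * e = e \<and> e = s e"

definition SEP :: "('a::ring_1 \<Rightarrow> 'a) \<Rightarrow> 'a \<Rightarrow> bool" where
  "SEP s a \<longleftrightarrow> group_invertible a \<and> mp_invertible s a \<and>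
     s a = mp_inv s a \<and> mp_inv s a = group_inv a"

end

theory Submission
  imports Defs
begin

(* Write b for the Moore-Penrose inverse of a and P = b a^3 a* b. If a is SEP, then a* = b
   commutes with a and P collapses to the projection ab. Conversely, P absorbs ab on the right
   and ba on the left; as P, ab and ba are self-adjoint, it also absorbs ab on the left and ba on
   the right. The factor a^3 a* can be cancelled on either side with the help of the group
   inverse, which turns these identities into a b^2 = b = b^2 a, hence ab = ba and b is the group
   inverse. Then P = a^2 a* b, and P^2 = P reduces to a* a a* = a*, so a* is a Moore-Penrose
   inverse of a. *)

lemma group_inverse_unique:
  assumes b: "is_group_inverse a b" and c: "is_group_inverse a c"
  shows "b = c"
proof -
  have b1: "a * b * a = a" "b * a * b = b" "a * b = b * a"
    and c1: "a * c * a = a" "c * a * c = c" "a * c = c * a"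
    using b c by (auto simp: is_group_inverse_def)
  have "a * c = (a * b) * (a * c)" using b1(1) by (simp add: mult.assoc[symmetric])
  also have "\<dots> = (b * a) * (c * a)" using b1(3) c1(3) by simp
  also have "\<dots> = b * a" using c1(1) by (simp add: mult.assoc)
  finally have ac_ab: "a * c = a * b" using b1(3) by simp
  have "b = (b * a) * b" using b1(2) by (simp add: mult.assoc)
  also have "\<dots> = (c * a) * c" using ac_ab b1(2,3) c1(3) by (metis mult.assoc)
  also have "\<dots> = c" using c1(2) .
  finally show ?thesis .
qed

lemma group_inv_eqI: "is_group_inverse a g \<Longrightarrow> group_inv a = g"
  unfolding group_inv_def by (blast intro: group_inverse_unique)

lemma group_inverse_absorb:
  assumes "is_group_inverse a g"
  shows "a * a * g = a" and "g * a * a = a"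
proof -
  have aga: "a * g * a = a" and comm: "a * g = g * a"
    using assms by (auto simp: is_group_inverse_def)
  have "a * a * g = a * (g * a)" by (simp add: mult.assoc comm)
  then show "a * a * g = a" using aga by (simp add: mult.assoc)
  show "g * a * a = a" using aga by (simp add: comm[symmetric])
qed

lemma group_inverse_cube:
  assumes "is_group_inverse a g"
  shows "a ^ 3 * g * g = a" and "g * g * a ^ 3 = a"
proof -
  have "a ^ 3 * g * g = a * (a * a * g) * g" by (simp add: power3_eq_cube mult.assoc)
  then show "a ^ 3 * g * g = a" using group_inverse_absorb[OF assms] by simp
  have "g * g * a ^ 3 = g * (g * a * a) * a" by (simp add: power3_eq_cube mult.assoc)
  then show "g * g * a ^ 3 = a" using group_inverse_absorb[OF assms] by simp
qed

lemma mp_inverse_commuting_group_inverse: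
  "is_mp_inverse s a b \<Longrightarrow> a * b = b * a \<Longrightarrow> is_group_inverse a b"
  unfolding is_mp_inverse_def is_group_inverse_def by simp

locale involutive_ring =
  fixes s :: "'a::ring_1 \<Rightarrow> 'a"
  assumes involution: "is_involution s"
begin

lemma star_star: "s (s x) = x"
  using involution by (simp add: is_involution_def)

lemma star_mult: "s (x * y) = s y * s x"
  using involution by (simp add: is_involution_def)

lemma self_adjoint_absorb_iff:
  assumes "s e = e" and "s p = p"
  shows "e * p = e \<longleftrightarrow> p * e = e"
proof -
  have "s (e * p) = p * e" and "s (p * e) = e * p" using assms by (simp_all add: star_mult)
  then show ?thesis using assms by metis
qed

lemma mp_inverse_unique:
  assumes b: "is_mp_inverse s a b" and c: "is_mp_inverse s a c"
  shows "b = c"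
proof -
  have b1: "a * b * a = a" "b * a * b = b" "s (a * b) = a * b" "s (b * a) = b * a"
    and c1: "a * c * a = a" "c * a * c = c" "s (a * c) = a * c" "s (c * a) = c * a"
    using b c by (auto simp: is_mp_inverse_def)
  have "b = b * s (a * b)" using b1(2,3) by (simp add: mult.assoc)
  also have "\<dots> = b * s (a * c * a * b)" using c1(1) by simp
  also have "\<dots> = b * s (a * b) * s (a * c)" by (simp add: star_mult mult.assoc)
  also have "\<dots> = b * a * c" using b1(2,3) c1(3) by (simp add: mult.assoc)
  finally have b_eq: "b = b * a * c" .
  have "c = s (c * a) * c" using c1(2,4) by (simp add: mult.assoc)
  also have "\<dots> = s (c * a * b * a) * c" using b1(1) by (simp add: mult.assoc)
  also have "\<dots> = s (b * a) * s (c * a) * c" by (simp add: star_mult mult.assoc)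
  also have "\<dots> = b * a * c" using b1(4) c1(2,4) by (simp add: mult.assoc)
  finally show ?thesis using b_eq by simp
qed

lemma mp_inv_eqI: "is_mp_inverse s a b \<Longrightarrow> mp_inv s a = b"
  unfolding mp_inv_def by (blast intro: mp_inverse_unique)

lemma mp_inverse_projection: "is_mp_inverse s a b \<Longrightarrow> projection s (a * b)"
  unfolding is_mp_inverse_def projection_def by (simp add: mult.assoc[symmetric])

lemma mp_inverse_star_absorb:
  assumes "is_mp_inverse s a b"
  shows "b * a * s a = s a" and "s a * a * b = s a"
proof -
  have aba: "a * b * a = a" and ab: "s (a * b) = a * b" and ba: "s (b * a) = b * a"
    using assms by (auto simp: is_mp_inverse_def)
  have "b * a * s a = s (a * (b * a))" using ba by (simp add: star_mult)
  then show "b * a * s a = s a" using aba by (simp add: mult.assoc)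
  have "s a * (a * b) = s (a * b * a)" using ab by (simp add: star_mult)
  then show "s a * a * b = s a" using aba by (simp add: mult.assoc)
qed

lemma group_inverse_star:
  assumes "is_group_inverse a g"
  shows "is_group_inverse (s a) (s g)"
proof -
  have "a * g * a = a" "g * a * g = g" "a * g = g * a"
    using assms by (auto simp: is_group_inverse_def)
  moreover have "s a * s g * s a = s (a * g * a)" "s g * s a * s g = s (g * a * g)"
    "s a * s g = s (g * a)" "s g * s a = s (a * g)"
    by (simp_all add: star_mult mult.assoc)
  ultimately show ?thesis unfolding is_group_inverse_def by simp
qed

lemma cube_star_mp_right_cancel:
  assumes mp: "is_mp_inverse s a b" and grp: "is_group_inverse a g"
  shows "a ^ 3 * s a * b * (a * s a * s g * s b * g * g) = a"
proof -
  have aba: "a * b * a = a" and ba: "s (b * a) = b * a"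
    using mp by (auto simp: is_mp_inverse_def)
  have "a ^ 3 * s a * b * (a * s a * s g * s b * g * g)
      = a ^ 3 * (s a * (b * a * s a) * s g) * s b * g * g"
    by (simp add: mult.assoc)
  also have "\<dots> = a ^ 3 * (s a * s b) * g * g"
    using mp_inverse_star_absorb(1)[OF mp] group_inverse_absorb(1)[OF group_inverse_star[OF grp]]
    by (simp add: mult.assoc)
  also have "\<dots> = a * a * (a * b * a) * g * g"
    using ba by (simp add: star_mult power3_eq_cube mult.assoc)
  also have "\<dots> = a" using aba group_inverse_cube(1)[OF grp] by (simp add: power3_eq_cube)
  finally show ?thesis .
qed

lemma cube_star_left_cancel:
  assumes mp: "is_mp_inverse s a b" and grp: "is_group_inverse a g"
  shows "b * g * g * (a ^ 3 * s a) = s a"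
proof -
  have "b * g * g * (a ^ 3 * s a) = b * (g * g * a ^ 3) * s a" by (simp add: mult.assoc)
  then show ?thesis using group_inverse_cube(2)[OF grp] mp_inverse_star_absorb(1)[OF mp] by simp
qed

lemma projection_cube_star_square_left:
  assumes mp: "is_mp_inverse s a b" and grp: "is_group_inverse a g"
    and proj: "projection s (b * a ^ 3 * s a * b)"
  shows "a * b * b = b"
proof -
  define m where "m = a ^ 3 * s a * b"
  define W where "W = a * s a * s g * s b * g * g"
  have mW: "m * W = a" unfolding m_def W_def using cube_star_mp_right_cancel[OF mp grp] .
  have bab: "b * a * b = b" and ab: "s (a * b) = a * b"
    using mp by (auto simp: is_mp_inverse_def)
  have sP: "s (b * m) = b * m" using proj unfolding m_def projection_def by (simp add: mult.assoc)
  have "b * m * (a * b) = b * m" unfolding m_def using bab by (simp add: mult.assoc)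
  then have "a * b * (b * m) = b * m" using self_adjoint_absorb_iff[OF sP ab] by blast
  then have "a * b * (b * m) * W * b = b * m * W * b" by simp
  then have "a * b * b * (m * W) * b = b * (m * W) * b" by (simp add: mult.assoc)
  then have "a * b * (b * a * b) = b * a * b" using mW by (simp add: mult.assoc)
  then show ?thesis using bab by (simp add: mult.assoc)
qed

lemma projection_cube_star_square_right:
  assumes mp: "is_mp_inverse s a b" and grp: "is_group_inverse a g"
    and proj: "projection s (b * a ^ 3 * s a * b)"
  shows "b * b * a = b"
proof -
  define m where "m = a ^ 3 * s a"
  have aba: "a * b * a = a" and ba: "s (b * a) = b * a" and ab: "s (a * b) = a * b"
    using mp by (auto simp: is_mp_inverse_def)
  have "a * b * m = (a * b * a) * a * a * s a" unfolding m_def by (simp add: power3_eq_cube mult.assoc)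
  then have abm: "a * b * m = m" unfolding m_def using aba by (simp add: power3_eq_cube)
  have sP: "s (b * m * b) = b * m * b"
    using proj unfolding m_def projection_def by (simp add: mult.assoc)
  have "b * a * (b * m * b) = b * (a * b * m) * b" by (simp add: mult.assoc)
  then have "b * a * (b * m * b) = b * m * b" using abm by simp
  then have "b * m * b * (b * a) = b * m * b" using self_adjoint_absorb_iff[OF sP ba] by blast
  then have "a * (b * m * b * (b * a)) = a * (b * m * b)" by simp
  then have "m * b * b * a = m * b" using abm by (simp add: mult.assoc[symmetric])
  then have "b * g * g * m * b * b * a = b * g * g * m * b" by (simp add: mult.assoc)
  then have "s b * (s a * b * b * a) = s b * (s a * b)"
    using cube_star_left_cancel[OF mp grp] unfolding m_def by simp
  moreover have "s b * s a = a * b" using ab by (simp add: star_mult)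
  ultimately have "a * b * b * b * a = a * b * b" by (simp add: mult.assoc[symmetric])
  then show ?thesis using projection_cube_star_square_left[OF mp grp proj] by simp
qed

lemma projection_cube_star_commute:
  assumes mp: "is_mp_inverse s a b" and grp: "is_group_inverse a g"
    and proj: "projection s (b * a ^ 3 * s a * b)"
  shows "a * b = b * a"
proof -
  have "a * b = a * (b * b * a)" using projection_cube_star_square_right[OF mp grp proj] by simp
  also have "\<dots> = (a * b * b) * a" by (simp add: mult.assoc)
  also have "\<dots> = b * a" using projection_cube_star_square_left[OF mp grp proj] by simp
  finally show ?thesis .
qed

lemma projection_cube_star_star_mp_inverse:
  assumes mp: "is_mp_inverse s a b" and comm: "a * b = b * a"
    and proj: "projection s (b * a ^ 3 * s a * b)"
  shows "is_mp_inverse s a (s a)"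
proof -
  have aba: "a * b * a = a" using mp by (simp add: is_mp_inverse_def)
  have baa: "b * a * a = a" using aba comm by simp
  have bas: "b * a * s a = s a" and sab: "s a * a * b = s a"
    using mp_inverse_star_absorb[OF mp] by simp_all
  define P where "P = a * a * s a * b"
  have "b * a ^ 3 * s a * b = (b * a * a) * a * s a * b" by (simp add: power3_eq_cube mult.assoc)
  then have "projection s P" using proj baa unfolding P_def by simp
  then have "P * P = P" by (simp add: projection_def)
  moreover have "P * P = a * a * s a * (b * a * a) * s a * b" unfolding P_def by (simp add: mult.assoc)
  ultimately have "a * a * s a * a * s a * b = a * a * s a * b" using baa unfolding P_def by simp
  then have "b * b * (a * a * s a * a * s a * b) = b * b * (a * a * s a * b)" by simp
  moreover have "b * b * a * a = b * a" using baa by (simp add: mult.assoc)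
  ultimately have "s a * a * s a * b = s a * b" using bas by (simp add: mult.assoc[symmetric])
  then have "s a * a * s a * b * a = s a * b * a" by simp
  moreover have "s a * b * a = s a" using sab comm by (simp add: mult.assoc)
  ultimately have sas: "s a * a * s a = s a" by (simp add: mult.assoc)
  then have "s (s a * a * s a) = a" by (simp add: star_star)
  then have asa: "a * s a * a = a" by (simp add: star_mult star_star mult.assoc)
  show ?thesis unfolding is_mp_inverse_def
    using sas asa by (simp add: star_mult star_star)
qed

lemma commuting_cube_star_eq:
  assumes mp: "is_mp_inverse s a b" and comm: "a * b = b * a" and star: "s a = b"
  shows "b * a ^ 3 * s a * b = a * b"
proof -
  have aba: "a * b * a = a" and bab: "b * a * b = b" using mp by (auto simp: is_mp_inverse_def)
  have "b * a ^ 3 * s a * b = (b * a * a) * (a * b) * b" using star by (simp add: power3_eq_cube mult.assoc)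
  also have "\<dots> = a * (b * a * b)" using aba comm by (simp add: mult.assoc)
  also have "\<dots> = a * b" using bab by simp
  finally show ?thesis .
qed

end

theorem theorem2p5:
  fixes s :: "'a::ring_1 \<Rightarrow> 'a" and a :: 'a
  assumes "is_involution s"
    and "group_invertible a" and "mp_invertible s a"
  shows "SEP s a \<longleftrightarrow>
    projection s (mp_inv s a * a ^ 3 * s a * mp_inv s a)"
proof -
  interpret involutive_ring s by standard (fact assms(1))
  obtain b where mp: "is_mp_inverse s a b" using assms(3) by (auto simp: mp_invertible_def)
  obtain g where grp: "is_group_inverse a g" using assms(2) by (auto simp: group_invertible_def)
  have SEP_iff: "SEP s a \<longleftrightarrow> s a = b \<and> b = g"
    using assms(2,3) mp_inv_eqI[OF mp] group_inv_eqI[OF grp] by (auto simp: SEP_def)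
  show ?thesis unfolding mp_inv_eqI[OF mp]
  proof
    assume "SEP s a"
    then have "s a = b" and "a * b = b * a" using grp by (auto simp: SEP_iff is_group_inverse_def)
    then show "projection s (b * a ^ 3 * s a * b)"
      using commuting_cube_star_eq[OF mp] mp_inverse_projection[OF mp] by simp
  next
    assume proj: "projection s (b * a ^ 3 * s a * b)"
    have comm: "a * b = b * a" using projection_cube_star_commute[OF mp grp proj] .
    have "b = g" using group_inverse_unique[OF mp_inverse_commuting_group_inverse[OF mp comm] grp] .
    moreover have "s a = b"
      using mp_inverse_unique[OF projection_cube_star_star_mp_inverse[OF mp comm proj] mp] .
    ultimately show "SEP s a" by (simp add: SEP_iff)
  qed
qed

end
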